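(* Let $G$ be a finite group with $|G|\ge2$, $S\subseteq G$ symmetric, $H=\mathrm{Cay}(G,S)$ unweighted, $\alpha\in(0,1)$, and $C\ge1$. Let $S_\alpha=\{s\in\bar S:\mathrm{imp}(s)\ge\alpha\}$. Then there exist $\ell\ge\frac{\alpha}{C\log^2|G|}|S_\alpha|$, distinct $s_1,\dots,s_\ell\in S_\alpha$ and vectors $v_1,\dots,v_\ell\in\mathbb{R}^G$ with $v_i^\top L_Hv_i>0$ such that $\mathrm{score}(s_i,v_i)\ge\alpha$ for all $i\in[\ell]$ and $\mathrm{score}(s_i,v_j)\le\frac{\alpha}{C\log^2|G|}$ for all $1\le j<i\le\ell$.
   Context: Logarithms are base 2. For $g\in G$, $A_g\in\{0,1\}^{G\times G}$ is the permutation matrix with $(A_g)_{u,v}=1$ iff $v=ug$. $S$ symmetric means $s\in S\Rightarrow s^{-1}\in S$; $\bar S\subseteq S$ contains exactly one element of each pair $\{s,s^{-1}\}$ with $s\neq s^{-1}$ and every $s\in S$ with $s=s^{-1}$. $L_s=2I-A_s-A_{s^{-1}}$ if $s\ne s^{-1}$, $L_s=I-A_s$ if $s=s^{-1}$; $L_H=\sum_{s\in\bar S}L_s$. For $v$ with $v^\top L_Hv>0$, $\mathrm{score}(s,v)=\frac{v^\top L_sv}{v^\top L_Hv}$, and $\mathrm{imp}(s)=\max\{\mathrm{score}(s,v):v^\top L_Hv>0\}$. *)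

theory Defs
  imports "HOL-Algebra.Group" Complex_Main
begin

text \<open>Matrices indexed by G x G are functions 'a => 'a => real (only entries on the
carrier matter); vectors in R^G are functions 'a => real.\<close>

definition Amat :: "('a, 'b) monoid_scheme \<Rightarrow> 'a \<Rightarrow> 'a \<Rightarrow> 'a \<Rightarrow> real" where
  "Amat G g u w = (if w = u \<otimes>\<^bsub>G\<^esub> g then 1 else 0)"

definition Imat :: "'a \<Rightarrow> 'a \<Rightarrow> real" where
  "Imat u w = (if u = w then 1 else 0)"

definition Lmat :: "('a, 'b) monoid_scheme \<Rightarrow> 'a \<Rightarrow> 'a \<Rightarrow> 'a \<Rightarrow> real" where
  "Lmat G s u w =
     (if s \<noteq> inv\<^bsub>G\<^esub> s then 2 * Imat u w - Amat G s u w - Amat G (inv\<^bsub>G\<^esub> s) u w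
      else Imat u w - Amat G s u w)"

definition LH :: "('a, 'b) monoid_scheme \<Rightarrow> 'a set \<Rightarrow> 'a \<Rightarrow> 'a \<Rightarrow> real" where
  "LH G Sbar u w = (\<Sum>s\<in>Sbar. Lmat G s u w)"

definition qform :: "('a, 'b) monoid_scheme \<Rightarrow> ('a \<Rightarrow> 'a \<Rightarrow> real) \<Rightarrow> ('a \<Rightarrow> real) \<Rightarrow> real" where
  "qform G M v = (\<Sum>u\<in>carrier G. \<Sum>w\<in>carrier G. v u * M u w * v w)"

definition score :: "('a, 'b) monoid_scheme \<Rightarrow> 'a set \<Rightarrow> 'a \<Rightarrow> ('a \<Rightarrow> real) \<Rightarrow> real" where
  "score G Sbar s v = qform G (Lmat G s) v / qform G (LH G Sbar) v"

text \<open>imp(s) = max of scores over v with v^T L_H v > 0 (the max exists whenever the set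
is nonempty, so it equals the Sup). Convention: 0 if no such v exists.\<close>
definition imp :: "('a, 'b) monoid_scheme \<Rightarrow> 'a set \<Rightarrow> 'a \<Rightarrow> real" where
  "imp G Sbar s =
     (let X = {score G Sbar s v | v. qform G (LH G Sbar) v > 0} in
      if X = {} then 0 else Sup X)"

definition symmetric_set :: "('a, 'b) monoid_scheme \<Rightarrow> 'a set \<Rightarrow> bool" where
  "symmetric_set G S \<longleftrightarrow> S \<subseteq> carrier G \<and> (\<forall>s\<in>S. inv\<^bsub>G\<^esub> s \<in> S)"

definition is_Sbar :: "('a, 'b) monoid_scheme \<Rightarrow> 'a set \<Rightarrow> 'a set \<Rightarrow> bool" where
  "is_Sbar G S Sbar \<longleftrightarrow> Sbar \<subseteq> S
     \<and> (\<forall>s\<in>S. s = inv\<^bsub>G\<^esub> s \<longrightarrow> s \<in> Sbar)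
     \<and> (\<forall>s\<in>S. s \<noteq> inv\<^bsub>G\<^esub> s \<longrightarrow> (s \<in> Sbar \<longleftrightarrow> inv\<^bsub>G\<^esub> s \<notin> Sbar))"

definition S_alpha :: "('a, 'b) monoid_scheme \<Rightarrow> 'a set \<Rightarrow> real \<Rightarrow> 'a set" where
  "S_alpha G Sbar \<alpha> = {s \<in> Sbar. imp G Sbar s \<ge> \<alpha>}"

end

theory Submission
  imports Defs "HOL-Analysis.Analysis"
begin

text \<open>
  Since \<open>v\<^sup>T L\<^sub>s v = c\<^sub>s \<Sum>\<^sub>u (v u - v (u s))\<^sup>2\<close> with \<open>c\<^sub>s > 0\<close> and \<open>L\<^sub>H = \<Sum>\<^sub>s L\<^sub>s\<close>, for every \<open>v\<close> with
  \<open>v\<^sup>T L\<^sub>H v > 0\<close> the scores \<open>score(s, v)\<close>, \<open>s \<in> Sbar\<close>, are nonnegative and sum to 1; so a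
  single \<open>v\<close> gives score at least \<open>\<epsilon>\<close> to at most \<open>1/\<epsilon>\<close> generators. The supremum defining
  \<open>imp(s)\<close> is attained: scores do not change under scaling \<open>v\<close> or under subtracting from \<open>v\<close> its
  value at a fixed point of each connected component of \<open>H\<close> (the kernel of \<open>L\<^sub>H\<close> consists of the
  functions constant on components), and the centred unit vectors form a compact set on which
  \<open>v\<^sup>T L\<^sub>H v > 0\<close>. Now take a maximal sequence
  \<open>(s\<^sub>i, v\<^sub>i)\<close> with \<open>score(s\<^sub>i, v\<^sub>i) \<ge> \<alpha>\<close> and \<open>score(s\<^sub>i, v\<^sub>j) \<le> \<epsilon>\<close> for \<open>j < i\<close>. By maximality every
  \<open>s \<in> S\<^sub>\<alpha>\<close> has score at least \<open>\<epsilon>\<close> on some \<open>v\<^sub>j\<close>, whence \<open>|S\<^sub>\<alpha>| \<le> l/\<epsilon>\<close>. This works for every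
  \<open>0 < \<epsilon> \<le> \<alpha>\<close>; the factor \<open>C log\<^sup>2|G| \<ge> 1\<close> only serves to make \<open>\<epsilon> \<le> \<alpha>\<close>.
\<close>

section \<open>Greedy selection of separated witnesses\<close>

definition separated_sequence ::
    "'a set \<Rightarrow> ('v \<Rightarrow> bool) \<Rightarrow> ('a \<Rightarrow> 'v \<Rightarrow> real) \<Rightarrow> real \<Rightarrow> real
     \<Rightarrow> nat \<Rightarrow> (nat \<Rightarrow> 'a) \<Rightarrow> (nat \<Rightarrow> 'v) \<Rightarrow> bool" where
  "separated_sequence A P f \<alpha> \<epsilon> l s v \<longleftrightarrow>
     inj_on s {1..l} \<and> s ` {1..l} \<subseteq> A
     \<and> (\<forall>i\<in>{1..l}. P (v i) \<and> f (s i) (v i) \<ge> \<alpha>)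
     \<and> (\<forall>i\<in>{1..l}. \<forall>j\<in>{1..l}. j < i \<longrightarrow> f (s i) (v j) \<le> \<epsilon>)"

lemma separated_sequence_0: "separated_sequence A P f \<alpha> \<epsilon> 0 s v"
  by (simp add: separated_sequence_def)

lemma separated_sequence_snoc:
  assumes "separated_sequence A P f \<alpha> \<epsilon> l s v" "\<epsilon> \<le> \<alpha>"
    and "t \<in> A" "P w" "f t w \<ge> \<alpha>" "\<forall>j\<in>{1..l}. f t (v j) < \<epsilon>"
  shows "separated_sequence A P f \<alpha> \<epsilon> (Suc l) (s(Suc l := t)) (v(Suc l := w))"
proof -
  have "t \<notin> s ` {1..l}"
  proof
    assume "t \<in> s ` {1..l}"
    then obtain j where "j \<in> {1..l}" "t = s j"
      by blast
    then show False
      using assms unfolding separated_sequence_def by fastforce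
  qed
  moreover have "{1..Suc l} = insert (Suc l) {1..l}" and "Suc l \<notin> {1..l}"
    by auto
  ultimately show ?thesis
    using assms unfolding separated_sequence_def
    by (auto simp: inj_on_fun_updI intro: less_imp_le)
qed

lemma separated_sequence_length_le:
  assumes "separated_sequence A P f \<alpha> \<epsilon> l s v" "finite A"
  shows "l \<le> card A"
proof -
  have "card (s ` {1..l}) = l"
    using assms(1) by (simp add: separated_sequence_def card_image)
  moreover have "card (s ` {1..l}) \<le> card A"
    using assms by (intro card_mono) (auto simp: separated_sequence_def)
  ultimately show ?thesis
    by simp
qed

lemma exists_maximal_separated_sequence:
  assumes "finite A"
  obtains l s v where "separated_sequence A P f \<alpha> \<epsilon> l s v"
    and "\<And>l' s' v'. separated_sequence A P f \<alpha> \<epsilon> l' s' v' \<Longrightarrow> l' \<le> l"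
proof -
  define K where "K = {l. \<exists>s v. separated_sequence A P f \<alpha> \<epsilon> l s v}"
  have "finite K"
    using separated_sequence_length_le[OF _ assms]
    by (intro finite_subset[of K "{..card A}"]) (auto simp: K_def)
  moreover have "0 \<in> K"
    using separated_sequence_0 unfolding K_def by blast
  ultimately have "Max K \<in> K"
    by (intro Max_in) auto
  then show ?thesis
    using that Max_ge[OF \<open>finite K\<close>] unfolding K_def by blast
qed

lemma maximal_separated_sequence_covers:
  assumes "separated_sequence A P f \<alpha> \<epsilon> l s v" "\<epsilon> \<le> \<alpha>"
    and maximal: "\<And>l' s' v'. separated_sequence A P f \<alpha> \<epsilon> l' s' v' \<Longrightarrow> l' \<le> l"
    and witness: "\<And>t. t \<in> A \<Longrightarrow> \<exists>w. P w \<and> f t w \<ge> \<alpha>"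
  shows "A \<subseteq> (\<Union>j\<in>{1..l}. {t\<in>A. f t (v j) \<ge> \<epsilon>})"
proof
  fix t assume "t \<in> A"
  show "t \<in> (\<Union>j\<in>{1..l}. {t\<in>A. f t (v j) \<ge> \<epsilon>})"
  proof (rule ccontr)
    assume "t \<notin> (\<Union>j\<in>{1..l}. {t\<in>A. f t (v j) \<ge> \<epsilon>})"
    then have "\<forall>j\<in>{1..l}. f t (v j) < \<epsilon>"
      using \<open>t \<in> A\<close> by auto
    moreover obtain w where "P w" "f t w \<ge> \<alpha>"
      using witness[OF \<open>t \<in> A\<close>] by blast
    ultimately have "separated_sequence A P f \<alpha> \<epsilon> (Suc l) (s(Suc l := t)) (v(Suc l := w))"
      by (intro separated_sequence_snoc[OF assms(1,2) \<open>t \<in> A\<close>])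
    then show False
      using maximal by fastforce
  qed
qed

lemma card_ge_mult_le_sum:
  fixes f :: "'a \<Rightarrow> real"
  assumes "finite A" "\<And>x. x \<in> A \<Longrightarrow> f x \<ge> 0"
  shows "\<epsilon> * card {x\<in>A. f x \<ge> \<epsilon>} \<le> (\<Sum>x\<in>A. f x)"
proof -
  have "\<epsilon> * card {x\<in>A. f x \<ge> \<epsilon>} = (\<Sum>x\<in>{x\<in>A. f x \<ge> \<epsilon>}. \<epsilon>)"
    by simp
  also have "\<dots> \<le> (\<Sum>x\<in>{x\<in>A. f x \<ge> \<epsilon>}. f x)"
    by (intro sum_mono) simp
  also have "\<dots> \<le> (\<Sum>x\<in>A. f x)"
    using assms by (intro sum_mono2) auto
  finally show ?thesis .
qed

lemma greedy_separated_sequence: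
  assumes "finite A" "0 < \<epsilon>" "\<epsilon> \<le> \<alpha>"
    and witness: "\<And>t. t \<in> A \<Longrightarrow> \<exists>w. P w \<and> f t w \<ge> \<alpha>"
    and nonneg: "\<And>t w. t \<in> A \<Longrightarrow> P w \<Longrightarrow> f t w \<ge> 0"
    and total: "\<And>w. P w \<Longrightarrow> (\<Sum>t\<in>A. f t w) \<le> 1"
  shows "\<exists>l s v. real l \<ge> \<epsilon> * real (card A) \<and> separated_sequence A P f \<alpha> \<epsilon> l s v"
proof -
  obtain l s v where sv: "separated_sequence A P f \<alpha> \<epsilon> l s v"
    and maximal: "\<And>l' s' v'. separated_sequence A P f \<alpha> \<epsilon> l' s' v' \<Longrightarrow> l' \<le> l"
    using exists_maximal_separated_sequence[OF assms(1)] by blast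
  define heavy where "heavy j = {t\<in>A. f t (v j) \<ge> \<epsilon>}" for j
  have heavy_bound: "\<epsilon> * card (heavy j) \<le> 1" if "j \<in> {1..l}" for j
  proof -
    have "P (v j)"
      using sv that by (simp add: separated_sequence_def)
    then have "\<epsilon> * card (heavy j) \<le> (\<Sum>t\<in>A. f t (v j))"
      unfolding heavy_def using nonneg by (intro card_ge_mult_le_sum[OF assms(1)])
    also have "\<dots> \<le> 1"
      using total \<open>P (v j)\<close> .
    finally show ?thesis .
  qed
  have "card A \<le> card (\<Union>j\<in>{1..l}. heavy j)"
    using maximal_separated_sequence_covers[OF sv assms(3) maximal witness] assms(1)
    by (intro card_mono) (auto simp: heavy_def)
  also have "\<dots> \<le> (\<Sum>j\<in>{1..l}. card (heavy j))"
    by (rule card_UN_le) simp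
  finally have "real (card A) \<le> (\<Sum>j\<in>{1..l}. real (card (heavy j)))"
    by (simp flip: of_nat_sum)
  then have "\<epsilon> * card A \<le> (\<Sum>j\<in>{1..l}. \<epsilon> * card (heavy j))"
    using assms(2) by (simp flip: sum_distrib_left)
  also have "\<dots> \<le> (\<Sum>j\<in>{1..l}. 1)"
    by (intro sum_mono heavy_bound)
  finally show ?thesis
    using sv by auto
qed

section \<open>Quadratic forms of Cayley Laplacians\<close>

lemma (in group) sum_carrier_reindex_mult_right:
  assumes "s \<in> carrier G"
  shows "(\<Sum>u\<in>carrier G. f (u \<otimes> s)) = (\<Sum>u\<in>carrier G. f u)"
  by (rule sum.reindex_bij_witness[where i="\<lambda>u. u \<otimes> inv s" and j="\<lambda>u. u \<otimes> s"])
     (use assms in \<open>auto simp: m_assoc\<close>)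

definition edge_energy :: "('a, 'b) monoid_scheme \<Rightarrow> 'a \<Rightarrow> ('a \<Rightarrow> real) \<Rightarrow> real" where
  "edge_energy G s v = (\<Sum>u\<in>carrier G. (v u - v (u \<otimes>\<^bsub>G\<^esub> s))\<^sup>2)"

lemma qform_Imat:
  assumes "finite (carrier G)"
  shows "qform G Imat v = (\<Sum>u\<in>carrier G. (v u)\<^sup>2)"
  unfolding qform_def Imat_def using assms
  by (simp add: if_distrib if_distribR power2_eq_square cong: if_cong)

lemma (in group) qform_Amat:
  assumes "finite (carrier G)" "g \<in> carrier G"
  shows "qform G (Amat G g) v = (\<Sum>u\<in>carrier G. v u * v (u \<otimes> g))"
  unfolding qform_def Amat_def using assms
  by (simp add: if_distrib if_distribR cong: if_cong)

lemma (in group) qform_Amat_inv: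
  assumes "finite (carrier G)" "g \<in> carrier G"
  shows "qform G (Amat G (inv g)) v = qform G (Amat G g) v"
proof -
  have "(\<Sum>u\<in>carrier G. v u * v (u \<otimes> inv g))
      = (\<Sum>u\<in>carrier G. v (u \<otimes> g) * v (u \<otimes> g \<otimes> inv g))"
    using sum_carrier_reindex_mult_right[OF assms(2), of "\<lambda>u. v u * v (u \<otimes> inv g)"] by simp
  also have "\<dots> = (\<Sum>u\<in>carrier G. v u * v (u \<otimes> g))"
    using assms(2) by (simp add: m_assoc mult.commute)
  finally show ?thesis
    using assms by (simp add: qform_Amat)
qed

lemma (in group) edge_energy_eq_qform:
  assumes "finite (carrier G)" "s \<in> carrier G"
  shows "edge_energy G s v = 2 * qform G Imat v - 2 * qform G (Amat G s) v"
proof -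
  have "(\<Sum>u\<in>carrier G. (v (u \<otimes> s))\<^sup>2) = (\<Sum>u\<in>carrier G. (v u)\<^sup>2)"
    using sum_carrier_reindex_mult_right[OF assms(2)] .
  then show ?thesis
    using assms unfolding edge_energy_def
    by (simp add: qform_Imat qform_Amat power2_diff sum.distrib sum_subtractf
        sum_distrib_left algebra_simps)
qed

lemma (in group) qform_Lmat:
  assumes "finite (carrier G)" "s \<in> carrier G"
  shows "qform G (Lmat G s) v = (if s \<noteq> inv s then 1 else 1/2) * edge_energy G s v"
proof (cases "s = inv s")
  case True
  then have "qform G (Lmat G s) v = qform G Imat v - qform G (Amat G s) v"
    unfolding qform_def Lmat_def by (simp add: sum_subtractf algebra_simps)
  then show ?thesis
    using True assms by (simp add: edge_energy_eq_qform)
next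
  case False
  then have "qform G (Lmat G s) v
      = 2 * qform G Imat v - qform G (Amat G s) v - qform G (Amat G (inv s)) v"
    unfolding qform_def Lmat_def by (simp add: sum_subtractf sum.distrib sum_distrib_left algebra_simps)
  then show ?thesis
    using False assms by (simp add: edge_energy_eq_qform qform_Amat_inv)
qed

lemma qform_LH:
  assumes "finite Sbar"
  shows "qform G (LH G Sbar) v = (\<Sum>s\<in>Sbar. qform G (Lmat G s) v)"
  unfolding qform_def LH_def
  by (simp add: sum_distrib_left sum_distrib_right sum.swap[of _ Sbar])

lemma qform_scale: "qform G M (\<lambda>u. c * v u) = c\<^sup>2 * qform G M v"
  unfolding qform_def by (simp add: sum_distrib_left power2_eq_square algebra_simps)

lemma edge_energy_nonneg: "edge_energy G s v \<ge> 0"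
  unfolding edge_energy_def by (simp add: sum_nonneg)

lemma edge_energy_eq_0_iff:
  assumes "finite (carrier G)"
  shows "edge_energy G s v = 0 \<longleftrightarrow> (\<forall>u\<in>carrier G. v (u \<otimes>\<^bsub>G\<^esub> s) = v u)"
  unfolding edge_energy_def using assms by (auto simp: sum_nonneg_eq_0_iff)

lemma (in group) qform_Lmat_nonneg:
  assumes "finite (carrier G)" "s \<in> carrier G"
  shows "qform G (Lmat G s) v \<ge> 0"
  using assms by (simp add: qform_Lmat edge_energy_nonneg)

lemma score_scale:
  assumes "c \<noteq> 0"
  shows "score G Sbar s (\<lambda>u. c * v u) = score G Sbar s v"
  using assms unfolding score_def qform_scale by simp

lemma continuous_on_coordinate [continuous_intros]: "continuous_on A (\<lambda>v. v x :: real)"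
  by (rule continuous_on_subset[OF continuous_on_product_coordinates]) simp

lemma continuous_on_qform [continuous_intros]: "continuous_on A (qform G M)"
  unfolding qform_def by (intro continuous_intros)

section \<open>Scores on a finite Cayley graph\<close>

locale finite_cayley = group G for G (structure) +
  fixes Sbar :: "'a set"
  assumes finite_carrier: "finite (carrier G)"
    and Sbar_carrier: "Sbar \<subseteq> carrier G"
begin

lemma finite_Sbar: "finite Sbar"
  using finite_carrier Sbar_carrier by (rule finite_subset[rotated])

lemma qform_LH_nonneg: "qform G (LH G Sbar) v \<ge> 0"
  using Sbar_carrier finite_carrier
  by (auto simp: qform_LH[OF finite_Sbar] intro!: sum_nonneg qform_Lmat_nonneg)

lemma score_nonneg:
  assumes "s \<in> Sbar"
  shows "score G Sbar s v \<ge> 0"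
  unfolding score_def using assms Sbar_carrier finite_carrier
  by (auto intro!: divide_nonneg_nonneg qform_LH_nonneg qform_Lmat_nonneg)

lemma sum_score_eq_1:
  assumes "qform G (LH G Sbar) v > 0"
  shows "(\<Sum>s\<in>Sbar. score G Sbar s v) = 1"
  unfolding score_def sum_divide_distrib[symmetric] qform_LH[OF finite_Sbar, symmetric]
  using assms by simp

lemma sum_score_le_1:
  assumes "A \<subseteq> Sbar" "qform G (LH G Sbar) v > 0"
  shows "(\<Sum>s\<in>A. score G Sbar s v) \<le> 1"
proof -
  have "(\<Sum>s\<in>A. score G Sbar s v) \<le> (\<Sum>s\<in>Sbar. score G Sbar s v)"
    by (intro sum_mono2 finite_Sbar assms(1) score_nonneg) blast
  also have "\<dots> = 1"
    using sum_score_eq_1[OF assms(2)] .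
  finally show ?thesis .
qed

definition cayley_edges :: "('a \<times> 'a) set" where
  "cayley_edges = {(u, u \<otimes> t) | u t. u \<in> carrier G \<and> t \<in> Sbar}"

definition same_component :: "('a \<times> 'a) set" where
  "same_component = (cayley_edges \<union> cayley_edges\<inverse>)\<^sup>*"

definition component_rep :: "'a \<Rightarrow> 'a" where
  "component_rep u = (SOME x. (u, x) \<in> same_component)"

lemma same_component_carrier:
  assumes "(u, x) \<in> same_component" "u \<in> carrier G"
  shows "x \<in> carrier G"
  using assms unfolding same_component_def
  by (induction rule: rtrancl_induct) (use Sbar_carrier in \<open>auto simp: cayley_edges_def\<close>)

lemma same_component_rep: "(u, component_rep u) \<in> same_component"
  unfolding component_rep_def by (rule someI[of _ u]) (simp add: same_component_def)

lemma component_rep_eq: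
  assumes "(u, x) \<in> same_component"
  shows "component_rep x = component_rep u"
proof -
  have "sym same_component" and "trans same_component"
    unfolding same_component_def by (simp_all add: sym_rtrancl sym_Un_converse trans_rtrancl)
  then have "(x, y) \<in> same_component \<longleftrightarrow> (u, y) \<in> same_component" for y
    using assms by (meson symD transD)
  then show ?thesis
    unfolding component_rep_def by simp
qed

lemma component_rep_mult:
  assumes "u \<in> carrier G" "t \<in> Sbar"
  shows "component_rep (u \<otimes> t) = component_rep u"
  using assms by (intro component_rep_eq) (auto simp: same_component_def cayley_edges_def)

lemma component_rep_idem: "component_rep (component_rep u) = component_rep u"
  by (rule component_rep_eq[OF same_component_rep])

lemma component_rep_carrier: "u \<in> carrier G \<Longrightarrow> component_rep u \<in> carrier G"
  using same_component_carrier[OF same_component_rep] .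

lemma constant_on_same_component:
  assumes "\<And>t u. t \<in> Sbar \<Longrightarrow> u \<in> carrier G \<Longrightarrow> w (u \<otimes> t) = w u"
    and "(u, x) \<in> same_component"
  shows "w x = w u"
  using assms(2) unfolding same_component_def
  by (induction rule: rtrancl_induct) (auto simp: cayley_edges_def assms(1))

lemma qform_LH_eq_0_imp_constant:
  assumes "qform G (LH G Sbar) w = 0" "t \<in> Sbar" "u \<in> carrier G"
  shows "w (u \<otimes> t) = w u"
proof -
  have "t \<in> carrier G"
    using assms(2) Sbar_carrier by blast
  have "\<forall>t\<in>Sbar. qform G (Lmat G t) w = 0"
    using assms(1) Sbar_carrier finite_carrier
    by (simp add: qform_LH[OF finite_Sbar] sum_nonneg_eq_0_iff[OF finite_Sbar] qform_Lmat_nonneg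
        subsetD)
  then have "qform G (Lmat G t) w = 0"
    using assms(2) by blast
  then have "edge_energy G t w = 0"
    using qform_Lmat[OF finite_carrier \<open>t \<in> carrier G\<close>, of w] by (simp split: if_splits)
  then show ?thesis
    using assms(3) finite_carrier by (simp add: edge_energy_eq_0_iff)
qed

definition centre :: "('a \<Rightarrow> real) \<Rightarrow> 'a \<Rightarrow> real" where
  "centre v u = (if u \<in> carrier G then v u - v (component_rep u) else 0)"

lemma qform_Lmat_centre:
  assumes "t \<in> Sbar"
  shows "qform G (Lmat G t) (centre v) = qform G (Lmat G t) v"
proof -
  have "centre v u - centre v (u \<otimes> t) = v u - v (u \<otimes> t)" if "u \<in> carrier G" for u
    using that assms Sbar_carrier by (simp add: centre_def component_rep_mult subsetD)
  then have "edge_energy G t (centre v) = edge_energy G t v"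
    unfolding edge_energy_def by simp
  then show ?thesis
    using assms Sbar_carrier finite_carrier by (auto simp: qform_Lmat)
qed

lemma qform_LH_centre: "qform G (LH G Sbar) (centre v) = qform G (LH G Sbar) v"
  unfolding qform_LH[OF finite_Sbar] by (intro sum.cong refl qform_Lmat_centre)

lemma score_centre:
  assumes "s \<in> Sbar"
  shows "score G Sbar s (centre v) = score G Sbar s v"
  using assms by (simp add: score_def qform_LH_centre qform_Lmat_centre)

text \<open>Centring removes the kernel of \<open>L\<^sub>H\<close>: the form is positive on the compact set
  \<open>centred_sphere\<close>, and every score value is still taken on it.\<close>

definition centred_sphere :: "('a \<Rightarrow> real) set" where
  "centred_sphere = {w. (\<forall>u\<in>carrier G. w (component_rep u) = 0)
     \<and> (\<forall>x. x \<notin> carrier G \<longrightarrow> w x = 0) \<and> (\<Sum>u\<in>carrier G. (w u)\<^sup>2) = 1}"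

lemma qform_LH_pos_on_centred_sphere:
  assumes "w \<in> centred_sphere"
  shows "qform G (LH G Sbar) w > 0"
proof (rule ccontr)
  assume "\<not> qform G (LH G Sbar) w > 0"
  then have "qform G (LH G Sbar) w = 0"
    using qform_LH_nonneg[of w] by linarith
  then have "w (component_rep u) = w u" for u
    by (intro constant_on_same_component[OF _ same_component_rep] qform_LH_eq_0_imp_constant)
  then have "\<forall>u\<in>carrier G. w u = 0"
    using assms unfolding centred_sphere_def by auto
  then show False
    using assms unfolding centred_sphere_def by simp
qed

lemma exists_centred_sphere_same_score:
  assumes "s \<in> Sbar" "qform G (LH G Sbar) v > 0"
  shows "\<exists>w\<in>centred_sphere. score G Sbar s w = score G Sbar s v"
proof -
  define N where "N = (\<Sum>u\<in>carrier G. (centre v u)\<^sup>2)"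
  have "N \<noteq> 0"
  proof
    assume "N = 0"
    then have "\<forall>u\<in>carrier G. centre v u = 0"
      unfolding N_def using finite_carrier by (simp add: sum_nonneg_eq_0_iff)
    then have "qform G (LH G Sbar) (centre v) = 0"
      unfolding qform_def by simp
    then show False
      using assms(2) by (simp add: qform_LH_centre)
  qed
  then have "N > 0"
    unfolding N_def by (simp add: order.not_eq_order_implies_strict sum_nonneg)
  define w where "w = (\<lambda>u. centre v u / sqrt N)"
  have "score G Sbar s w = score G Sbar s v"
    using \<open>N > 0\<close> assms(1) score_scale[of "1 / sqrt N" G Sbar s "centre v"]
    unfolding w_def by (simp add: score_centre)
  moreover have "w \<in> centred_sphere"
  proof -
    have "w (component_rep u) = 0" if "u \<in> carrier G" for u
      using that by (simp add: w_def centre_def component_rep_carrier component_rep_idem)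
    moreover have "w x = 0" if "x \<notin> carrier G" for x
      using that by (simp add: w_def centre_def)
    moreover have "(\<Sum>u\<in>carrier G. (w u)\<^sup>2) = 1"
      using \<open>N > 0\<close> by (simp add: w_def power_divide N_def flip: sum_divide_distrib)
    ultimately show ?thesis
      unfolding centred_sphere_def by blast
  qed
  ultimately show ?thesis
    by blast
qed

lemma compact_centred_sphere: "compact centred_sphere"
proof -
  define B where "B = PiE UNIV (\<lambda>x. if x \<in> carrier G then {-1..1} else {0::real})"
  have "compactin (product_topology (\<lambda>_. euclidean) UNIV) B"
    unfolding B_def by (subst compactin_PiE) auto
  then have "compact B"
    by (simp add: euclidean_product_topology)
  moreover have "closed centred_sphere"
  proof -
    have "centred_sphere = (\<Inter>u\<in>carrier G. {w. w (component_rep u) = 0})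
        \<inter> (\<Inter>x\<in>- carrier G. {w. w x = 0}) \<inter> {w. (\<Sum>u\<in>carrier G. (w u)\<^sup>2) = 1}"
      unfolding centred_sphere_def by auto
    then show ?thesis
      by (simp only:) (intro closed_Int closed_INT ballI closed_Collect_eq continuous_intros)
  qed
  moreover have "centred_sphere \<subseteq> B"
  proof
    fix w assume w: "w \<in> centred_sphere"
    have "\<bar>w x\<bar> \<le> 1" if "x \<in> carrier G" for x
    proof -
      have "(w x)\<^sup>2 \<le> (\<Sum>u\<in>carrier G. (w u)\<^sup>2)"
        by (rule member_le_sum) (use that finite_carrier in auto)
      then show ?thesis
        using w by (simp add: centred_sphere_def abs_square_le_1)
    qed
    then show "w \<in> B"
      using w unfolding B_def centred_sphere_def by (simp add: PiE_iff abs_le_iff)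
  qed
  ultimately show ?thesis
    using compact_Int_closed[of B centred_sphere] by (simp add: inf.absorb2)
qed

lemma imp_attained:
  assumes "s \<in> Sbar" "imp G Sbar s > 0"
  shows "\<exists>v. qform G (LH G Sbar) v > 0 \<and> score G Sbar s v = imp G Sbar s"
proof -
  define X where "X = {score G Sbar s v | v. qform G (LH G Sbar) v > 0}"
  have "X \<noteq> {}"
    using assms(2) unfolding imp_def X_def by (auto split: if_splits)
  then have "centred_sphere \<noteq> {}"
    using exists_centred_sphere_same_score[OF assms(1)] unfolding X_def by blast
  moreover have "continuous_on centred_sphere (score G Sbar s)"
    unfolding score_def
    by (intro continuous_on_divide continuous_on_qform) (auto dest: qform_LH_pos_on_centred_sphere)
  ultimately obtain v where v: "v \<in> centred_sphere"
    and max: "\<forall>w\<in>centred_sphere. score G Sbar s w \<le> score G Sbar s v"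
    using continuous_attains_sup[OF compact_centred_sphere] by blast
  have "x \<le> score G Sbar s v" if "x \<in> X" for x
  proof -
    obtain v' where "x = score G Sbar s v'" "qform G (LH G Sbar) v' > 0"
      using \<open>x \<in> X\<close> unfolding X_def by blast
    then obtain w where "w \<in> centred_sphere" "x = score G Sbar s w"
      using exists_centred_sphere_same_score[OF assms(1)] by metis
    then show ?thesis
      using max by blast
  qed
  moreover have "score G Sbar s v \<in> X"
    using v qform_LH_pos_on_centred_sphere unfolding X_def by blast
  ultimately have "Sup X = score G Sbar s v"
    by (intro cSup_eq_maximum)
  then show ?thesis
    using \<open>X \<noteq> {}\<close> v qform_LH_pos_on_centred_sphere by (auto simp: imp_def X_def)
qed

lemma S_alpha_witness:
  assumes "t \<in> S_alpha G Sbar \<alpha>" "0 < \<alpha>"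
  shows "\<exists>w. qform G (LH G Sbar) w > 0 \<and> score G Sbar t w \<ge> \<alpha>"
proof -
  have "t \<in> Sbar" "\<alpha> \<le> imp G Sbar t"
    using assms(1) by (auto simp: S_alpha_def)
  then obtain w where "qform G (LH G Sbar) w > 0" "score G Sbar t w = imp G Sbar t"
    using imp_attained[OF \<open>t \<in> Sbar\<close>] assms(2) by (meson order.strict_trans2)
  then show ?thesis
    using \<open>\<alpha> \<le> imp G Sbar t\<close> by auto
qed

lemma separated_sequence_S_alpha:
  assumes "0 < \<epsilon>" "\<epsilon> \<le> \<alpha>"
  shows "\<exists>l s v. real l \<ge> \<epsilon> * real (card (S_alpha G Sbar \<alpha>))
    \<and> separated_sequence (S_alpha G Sbar \<alpha>) (\<lambda>w. qform G (LH G Sbar) w > 0) (score G Sbar) \<alpha> \<epsilon> l s v"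
proof -
  have "S_alpha G Sbar \<alpha> \<subseteq> Sbar"
    by (auto simp: S_alpha_def)
  then show ?thesis
    using assms
    by (intro greedy_separated_sequence finite_subset[OF _ finite_Sbar] S_alpha_witness
        score_nonneg sum_score_le_1) auto
qed

end

lemma one_le_mult_log2_squared:
  fixes n C :: real
  assumes "2 \<le> n" "1 \<le> C"
  shows "1 \<le> C * (log 2 n)\<^sup>2"
proof -
  have "1 \<le> log 2 n"
    using assms(1) by (simp add: le_log_iff)
  then have "1 \<le> (log 2 n)\<^sup>2"
    by simp
  then show ?thesis
    using assms(2) mult_mono[of 1 C 1 "(log 2 n)\<^sup>2"] by simp
qed

theorem mainTheorem5:
  fixes G (structure) and S Sbar :: "'a set" and \<alpha> C :: real
  assumes "group G" and "finite (carrier G)" and "card (carrier G) \<ge> 2"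
    and "symmetric_set G S" and "is_Sbar G S Sbar"
    and "0 < \<alpha>" and "\<alpha> < 1" and "C \<ge> 1"
  shows "\<exists>(l::nat) (s::nat \<Rightarrow> 'a) (v::nat \<Rightarrow> 'a \<Rightarrow> real).
    real l \<ge> \<alpha> / (C * (log 2 (real (card (carrier G))))\<^sup>2) * real (card (S_alpha G Sbar \<alpha>))
    \<and> inj_on s {1..l} \<and> s ` {1..l} \<subseteq> S_alpha G Sbar \<alpha>
    \<and> (\<forall>i\<in>{1..l}. qform G (LH G Sbar) (v i) > 0 \<and> score G Sbar (s i) (v i) \<ge> \<alpha>)
    \<and> (\<forall>i\<in>{1..l}. \<forall>j\<in>{1..l}. j < i \<longrightarrow>
         score G Sbar (s i) (v j) \<le> \<alpha> / (C * (log 2 (real (card (carrier G))))\<^sup>2))"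
proof -
  have "Sbar \<subseteq> carrier G"
    using assms(4,5) by (auto simp: symmetric_set_def is_Sbar_def)
  interpret finite_cayley G Sbar
    by (intro finite_cayley.intro finite_cayley_axioms.intro assms(1,2) \<open>Sbar \<subseteq> carrier G\<close>)
  define \<epsilon> where "\<epsilon> = \<alpha> / (C * (log 2 (real (card (carrier G))))\<^sup>2)"
  have "1 \<le> C * (log 2 (real (card (carrier G))))\<^sup>2"
    using assms(3,8) by (intro one_le_mult_log2_squared) simp_all
  then have "0 < \<epsilon>" and "\<epsilon> \<le> \<alpha>"
    unfolding \<epsilon>_def using assms(6) divide_left_mono[of 1 _ \<alpha>] by simp_all
  then show ?thesis
    using separated_sequence_S_alpha unfolding separated_sequence_def \<epsilon>_def by blast
qed

end
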